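(* Let $\Gamma$ be a connected signed graph on $N$ vertices with signed Laplacian $\mathcal{L}$, and let $P$ be the orthogonal projection of $\mathbb{R}^N$ onto $S_{\rm fixed}$. Then the operator $P\mathcal{L}$, considered as an operator from $S_{\rm fixed}$ to $S_{\rm fixed}$, has exactly $c(\Gamma_-)-1$ negative eigenvalues, exactly one zero eigenvalue and exactly $c(\Gamma_+)-1$ positive eigenvalues, independently of the choice of edge weights (with the given signs). In particular $S_{\rm fixed}$ is a maximal subspace of fixed index, i.e. a subspace of fixed index of dimension $c(\Gamma_+)+c(\Gamma_-)-1$.
   Context: A signed graph $\Gamma$ is a finite simple undirected graph with vertex set $\{1,\dots,N\}$ in which every edge $\{i,j\}$ carries a nonzero real weight $\gamma_{ij}$, which may be of either sign ($\gamma_{ij}=0$ for non-edges). The signed Laplacian has $\mathcal{L}_{ij}=\gamma_{ij}$ for $i\ne j$ and $\mathcal{L}_{ii}=-\sum_{k\ne i}\gamma_{ik}$. $\Gamma_+$ (resp. $\Gamma_-$) is the spanning subgraph on all vertices containing exactly the positively (resp. negatively) weighted edges; $c(H)$ is the number of connected components of $H$. $S_{\rm fixed}$ is the span of the characteristic vectors (entries $1$ on the component's vertices, $0$ elsewhere) of all components of $\Gamma_+$ and all components of $\Gamma_-$. A subspace $S$ (chosen independently of the weights) is a subspace of fixed index if the operator $P_S\mathcal{L}:S\to S$ ($P_S$ the orthogonal projection onto $S$) has the same numbers of negative, zero and positive eigenvalues for every choice of weights with the given signs. *)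

theory Defs
  imports "HOL-Analysis.Analysis"
begin

text \<open>A signed graph on the finite vertex type 'n is given by a weight function
  gamma, symmetric with zero diagonal; {i,j} is an edge iff gamma i j is nonzero.\<close>

definition signed_graph :: "('n::finite \<Rightarrow> 'n \<Rightarrow> real) \<Rightarrow> bool" where
  "signed_graph \<gamma> \<longleftrightarrow> (\<forall>i j. \<gamma> i j = \<gamma> j i) \<and> (\<forall>i. \<gamma> i i = 0)"

definition components :: "('n \<Rightarrow> 'n \<Rightarrow> bool) \<Rightarrow> 'n set set" where
  "components E = {{j. (\<lambda>a b. E a b \<or> E b a)\<^sup>*\<^sup>* i j} | i. True}"

definition connected_graph :: "('n \<Rightarrow> 'n \<Rightarrow> bool) \<Rightarrow> bool" where
  "connected_graph E \<longleftrightarrow> (\<forall>i j. (\<lambda>a b. E a b \<or> E b a)\<^sup>*\<^sup>* i j)"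

definition pos_edges :: "('n \<Rightarrow> 'n \<Rightarrow> real) \<Rightarrow> 'n \<Rightarrow> 'n \<Rightarrow> bool" where
  "pos_edges \<gamma> i j \<longleftrightarrow> \<gamma> i j > 0"

definition neg_edges :: "('n \<Rightarrow> 'n \<Rightarrow> real) \<Rightarrow> 'n \<Rightarrow> 'n \<Rightarrow> bool" where
  "neg_edges \<gamma> i j \<longleftrightarrow> \<gamma> i j < 0"

definition all_edges :: "('n \<Rightarrow> 'n \<Rightarrow> real) \<Rightarrow> 'n \<Rightarrow> 'n \<Rightarrow> bool" where
  "all_edges \<gamma> i j \<longleftrightarrow> \<gamma> i j \<noteq> 0"

definition num_components :: "('n::finite \<Rightarrow> 'n \<Rightarrow> bool) \<Rightarrow> nat" where
  "num_components E = card (components E)"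

definition signed_laplacian :: "('n::finite \<Rightarrow> 'n \<Rightarrow> real) \<Rightarrow> real^'n^'n" where
  "signed_laplacian \<gamma> = (\<chi> i j. if i = j then - (\<Sum>k\<in>UNIV - {i}. \<gamma> i k) else \<gamma> i j)"

definition char_vec :: "'n::finite set \<Rightarrow> real^'n" where
  "char_vec C = (\<chi> i. if i \<in> C then 1 else 0)"

definition S_fixed :: "('n::finite \<Rightarrow> 'n \<Rightarrow> real) \<Rightarrow> (real^'n) set" where
  "S_fixed \<gamma> = span (char_vec ` (components (pos_edges \<gamma>) \<union> components (neg_edges \<gamma>)))"

definition orth_proj :: "('a::euclidean_space) set \<Rightarrow> 'a \<Rightarrow> 'a" where
  "orth_proj S x = (THE p. p \<in> S \<and> (\<forall>s\<in>S. orthogonal (x - p) s))"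

definition compressed_op :: "('n::finite \<Rightarrow> 'n \<Rightarrow> real) \<Rightarrow> (real^'n) set \<Rightarrow> real^'n \<Rightarrow> real^'n" where
  "compressed_op \<gamma> S x = orth_proj S (signed_laplacian \<gamma> *v x)"

text \<open>Eigenvalues of an operator f considered as a map S to S, and multiplicities.
  (For the self-adjoint operator P_S L on S, geometric and algebraic multiplicity agree.)\<close>
definition eigenvalues_on :: "('a::euclidean_space \<Rightarrow> 'a) \<Rightarrow> 'a set \<Rightarrow> real set" where
  "eigenvalues_on f S = {c. \<exists>x\<in>S. x \<noteq> 0 \<and> f x = c *\<^sub>R x}"

definition eig_mult :: "('a::euclidean_space \<Rightarrow> 'a) \<Rightarrow> 'a set \<Rightarrow> real \<Rightarrow> nat" where
  "eig_mult f S c = dim {x\<in>S. f x = c *\<^sub>R x}"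

definition n_neg :: "('a::euclidean_space \<Rightarrow> 'a) \<Rightarrow> 'a set \<Rightarrow> nat" where
  "n_neg f S = (\<Sum>c\<in>{c\<in>eigenvalues_on f S. c < 0}. eig_mult f S c)"

definition n_zero :: "('a::euclidean_space \<Rightarrow> 'a) \<Rightarrow> 'a set \<Rightarrow> nat" where
  "n_zero f S = eig_mult f S 0"

definition n_pos :: "('a::euclidean_space \<Rightarrow> 'a) \<Rightarrow> 'a set \<Rightarrow> nat" where
  "n_pos f S = (\<Sum>c\<in>{c\<in>eigenvalues_on f S. c > 0}. eig_mult f S c)"

definition fixed_index :: "('n::finite \<Rightarrow> 'n \<Rightarrow> real) \<Rightarrow> (real^'n) set \<Rightarrow> bool" where
  "fixed_index \<gamma> S \<longleftrightarrow> subspace S \<and>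
     (\<forall>\<gamma>'. signed_graph \<gamma>' \<and> (\<forall>i j. sgn (\<gamma>' i j) = sgn (\<gamma> i j)) \<longrightarrow>
        n_neg (compressed_op \<gamma>' S) S = n_neg (compressed_op \<gamma> S) S \<and>
        n_zero (compressed_op \<gamma>' S) S = n_zero (compressed_op \<gamma> S) S \<and>
        n_pos (compressed_op \<gamma>' S) S = n_pos (compressed_op \<gamma> S) S)"

end

theory Submission
  imports Defs
begin

text \<open>
  Let P and M be the vectors constant along every positive, resp. negative, edge: the
  spans of the characteristic vectors of the components of \<Gamma>+ and \<Gamma>-, so S_fixed = P + M.
  As \<langle>L x, x\<rangle> = -1/2 \<Sum> \<gamma>(i,j) (x(i) - x(j))^2, the quadratic form is positive
  semidefinite on P, negative semidefinite on M, and its null vectors in P lie in M and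
  vice versa. For any self-adjoint operator on P + M with these properties the kernel is
  P \<inter> M, a negative eigenspace meets P trivially and a positive one meets M trivially;
  counting dimensions against the spectral decomposition gives n- = dim M - dim (P \<inter> M)
  and n+ = dim P - dim (P \<inter> M). Finally P \<inter> M consists of the vectors constant along all
  edges, so dim (P \<inter> M) = c(\<Gamma>) = 1. All of this depends only on the signs of the weights.
\<close>

section \<open>Orthogonal projection\<close>

lemma orth_proj_unique:
  fixes S :: "'a::euclidean_space set"
  assumes "subspace S" "p \<in> S" "q \<in> S"
    and "\<forall>s\<in>S. orthogonal (x - p) s" "\<forall>s\<in>S. orthogonal (x - q) s"
  shows "p = q"
proof -
  have "p - q \<in> S" using assms(1-3) by (rule subspace_diff)
  then have "(x - q - (x - p)) \<bullet> (p - q) = 0"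
    using assms(4,5) by (simp add: orthogonal_def inner_diff_left)
  then show ?thesis by simp
qed

lemma orth_proj:
  fixes S :: "'a::euclidean_space set"
  assumes "subspace S"
  shows "orth_proj S x \<in> S" "\<forall>s\<in>S. orthogonal (x - orth_proj S x) s"
proof -
  obtain y z where "y \<in> span S" "\<And>w. w \<in> span S \<Longrightarrow> orthogonal z w" "x = y + z"
    using orthogonal_subspace_decomp_exists by blast
  moreover have "span S = S" using assms by simp
  ultimately have "y \<in> S \<and> (\<forall>s\<in>S. orthogonal (x - y) s)"
    by auto
  then have "\<exists>!p. p \<in> S \<and> (\<forall>s\<in>S. orthogonal (x - p) s)"
    using orth_proj_unique[OF assms] by blast
  from theI'[OF this] show "orth_proj S x \<in> S" "\<forall>s\<in>S. orthogonal (x - orth_proj S x) s"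
    unfolding orth_proj_def by blast+
qed

lemma orth_proj_eqI:
  fixes S :: "'a::euclidean_space set"
  assumes "subspace S" "p \<in> S" "\<forall>s\<in>S. orthogonal (x - p) s"
  shows "orth_proj S x = p"
  using orth_proj_unique[OF assms(1) orth_proj(1)[OF assms(1)] assms(2)
      orth_proj(2)[OF assms(1)] assms(3)] .

lemma linear_orth_proj:
  fixes S :: "'a::euclidean_space set"
  assumes "subspace S"
  shows "linear (orth_proj S)"
proof (rule linearI)
  note P = orth_proj[OF assms]
  show "orth_proj S (x + y) = orth_proj S x + orth_proj S y" for x y
  proof (rule orth_proj_eqI[OF assms])
    show "orth_proj S x + orth_proj S y \<in> S" using P assms by (simp add: subspace_add)
    have "x + y - (orth_proj S x + orth_proj S y) = (x - orth_proj S x) + (y - orth_proj S y)"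
      by simp
    with P(2)[of x] P(2)[of y]
    show "\<forall>s\<in>S. orthogonal (x + y - (orth_proj S x + orth_proj S y)) s"
      unfolding orthogonal_def by (simp only: inner_add_left) simp
  qed
  show "orth_proj S (c *\<^sub>R x) = c *\<^sub>R orth_proj S x" for c x
  proof (rule orth_proj_eqI[OF assms])
    show "c *\<^sub>R orth_proj S x \<in> S" using P assms by (simp add: subspace_scale)
    have "c *\<^sub>R x - c *\<^sub>R orth_proj S x = c *\<^sub>R (x - orth_proj S x)"
      by (simp add: scaleR_diff_right)
    then show "\<forall>s\<in>S. orthogonal (c *\<^sub>R x - c *\<^sub>R orth_proj S x) s"
      using P(2)[of x] by (simp add: orthogonal_def)
  qed
qed

lemma inner_orth_proj_left:
  fixes S :: "'a::euclidean_space set"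
  assumes "subspace S" "y \<in> S"
  shows "orth_proj S x \<bullet> y = x \<bullet> y"
proof -
  have "(x - orth_proj S x) \<bullet> y = 0"
    using orth_proj(2)[OF assms(1), of x] assms(2) by (simp add: orthogonal_def)
  then show ?thesis by (simp add: inner_diff_left)
qed

section \<open>Self-adjoint operators on a subspace\<close>

lemma quadratic_nonneg_imp_linear_coeff_zero:
  fixes a b :: real
  assumes "\<And>t. 0 \<le> 2 * t * a + t\<^sup>2 * b"
  shows "a = 0"
proof (rule ccontr)
  assume "a \<noteq> 0"
  define t where "t = - a / (\<bar>b\<bar> + 1)"
  have "t * (\<bar>b\<bar> + 1) = - a" unfolding t_def by simp
  then have tb: "t * \<bar>b\<bar> = - a - t" by (simp add: algebra_simps)
  have "t\<^sup>2 * b \<le> t\<^sup>2 * \<bar>b\<bar>" by (rule mult_left_mono) simp_all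
  also have "t\<^sup>2 * \<bar>b\<bar> = t * (- a - t)" by (simp add: power2_eq_square mult.assoc tb)
  finally have "2 * t * a + t\<^sup>2 * b \<le> t * a - t\<^sup>2" by (simp add: algebra_simps power2_eq_square)
  moreover have "t * a < 0"
  proof -
    have "0 < a\<^sup>2 / (\<bar>b\<bar> + 1)" using \<open>a \<noteq> 0\<close> by (intro divide_pos_pos) auto
    then show ?thesis unfolding t_def by (simp add: power2_eq_square)
  qed
  ultimately show False using assms[of t] zero_le_power2[of t] by linarith
qed

locale selfadjoint_on =
  fixes S :: "'a::euclidean_space set" and f :: "'a \<Rightarrow> 'a"
  assumes subspace: "subspace S"
    and linear: "linear f"
    and maps_to: "x \<in> S \<Longrightarrow> f x \<in> S"
    and symmetric: "x \<in> S \<Longrightarrow> y \<in> S \<Longrightarrow> f x \<bullet> y = x \<bullet> f y"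
begin

lemma selfadjoint_on_invariant_subspace:
  assumes "subspace W" "W \<subseteq> S" "\<And>x. x \<in> W \<Longrightarrow> f x \<in> W"
  shows "selfadjoint_on W f"
  by (rule selfadjoint_on.intro) (use assms linear in \<open>auto intro!: symmetric\<close>)

lemma form_add_scaled:
  assumes "x \<in> S" "y \<in> S"
  shows "f (x + t *\<^sub>R y) \<bullet> (x + t *\<^sub>R y) = f x \<bullet> x + 2 * t * (f x \<bullet> y) + t\<^sup>2 * (f y \<bullet> y)"
proof -
  have "f y \<bullet> x = f x \<bullet> y" using symmetric[OF assms] by (simp add: inner_commute)
  then show ?thesis
    by (simp add: linear_add[OF linear] linear_scale[OF linear] inner_add_left inner_add_right
        power2_eq_square algebra_simps)
qed

lemma rayleigh_bound:
  assumes "\<forall>y\<in>S. norm y = 1 \<longrightarrow> f y \<bullet> y \<le> c" "v \<in> S"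
  shows "f v \<bullet> v \<le> c * (v \<bullet> v)"
proof (cases "v = 0")
  case True
  then show ?thesis by (simp add: linear_0[OF linear])
next
  case False
  have "v /\<^sub>R norm v \<in> S" "norm (v /\<^sub>R norm v) = 1"
    using assms(2) False subspace by (simp_all add: subspace_scale)
  then have "f (v /\<^sub>R norm v) \<bullet> (v /\<^sub>R norm v) \<le> c"
    using assms(1) by blast
  moreover have "f (v /\<^sub>R norm v) \<bullet> (v /\<^sub>R norm v) = (f v \<bullet> v) / (v \<bullet> v)"
    using False by (simp add: linear_scale[OF linear] dot_square_norm power2_eq_square field_simps)
  moreover have "0 < v \<bullet> v" using False by simp
  ultimately show ?thesis by (simp add: divide_le_eq)
qed

lemma rayleigh_maximizer_is_eigenvector:
  assumes "u \<in> S" "norm u = 1" "\<forall>y\<in>S. norm y = 1 \<longrightarrow> f y \<bullet> y \<le> f u \<bullet> u"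
  shows "f u = (f u \<bullet> u) *\<^sub>R u"
proof -
  define c where "c = f u \<bullet> u"
  define w where "w = f u - c *\<^sub>R u"
  have uu: "u \<bullet> u = 1" using assms(2) by (simp add: dot_square_norm)
  have wS: "w \<in> S"
    unfolding w_def using assms(1) maps_to subspace by (simp add: subspace_diff subspace_scale)
  have uw: "u \<bullet> w = 0" unfolding w_def c_def using uu by (simp add: inner_diff_right inner_commute)
  have "f u = w + c *\<^sub>R u" by (simp add: w_def)
  then have fuw: "f u \<bullet> w = w \<bullet> w"
    using uw by (simp add: inner_add_left inner_add_right inner_commute)
  \<comment> \<open>Along the line u + t w the Rayleigh quotient may not exceed its value c at u.\<close>
  have "0 \<le> 2 * t * (- (w \<bullet> w)) + t\<^sup>2 * (c * (w \<bullet> w) - f w \<bullet> w)" for t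
  proof -
    have "u + t *\<^sub>R w \<in> S" using assms(1) wS subspace by (simp add: subspace_add subspace_scale)
    then have "f (u + t *\<^sub>R w) \<bullet> (u + t *\<^sub>R w) \<le> c * ((u + t *\<^sub>R w) \<bullet> (u + t *\<^sub>R w))"
      by (rule rayleigh_bound[OF assms(3)[folded c_def]])
    moreover have "(u + t *\<^sub>R w) \<bullet> (u + t *\<^sub>R w) = 1 + t\<^sup>2 * (w \<bullet> w)"
      using uu uw by (simp add: inner_add_left inner_add_right inner_commute power2_eq_square)
    ultimately have "c + 2 * t * (w \<bullet> w) + t\<^sup>2 * (f w \<bullet> w) \<le> c * (1 + t\<^sup>2 * (w \<bullet> w))"
      unfolding form_add_scaled[OF assms(1) wS] fuw c_def[symmetric] by simp
    then show ?thesis by (simp add: algebra_simps)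
  qed
  then have "- (w \<bullet> w) = 0" by (rule quadratic_nonneg_imp_linear_coeff_zero)
  then have "w = 0" by simp
  then show ?thesis by (simp add: w_def c_def)
qed

lemma exists_eigenvector:
  assumes "S \<noteq> {0}"
  obtains u c where "u \<in> S" "u \<noteq> 0" "f u = c *\<^sub>R u"
proof -
  let ?K = "S \<inter> sphere 0 1"
  have "compact ?K" using closed_subspace[OF subspace] compact_sphere by blast
  obtain w where "w \<in> S" "w \<noteq> 0" using assms subspace subspace_0 by blast
  then have "w /\<^sub>R norm w \<in> ?K" using subspace by (simp add: subspace_scale)
  then have "?K \<noteq> {}" by blast
  moreover have "continuous_on ?K (\<lambda>x. f x \<bullet> x)"
    using linear
    by (intro continuous_intros linear_continuous_on linear_conv_bounded_linear[THEN iffD1])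
  ultimately obtain u where u: "u \<in> ?K" and max: "\<And>y. y \<in> ?K \<Longrightarrow> f y \<bullet> y \<le> f u \<bullet> u"
    using continuous_attains_sup[OF \<open>compact ?K\<close>] by blast
  have "\<forall>y\<in>S. norm y = 1 \<longrightarrow> f y \<bullet> y \<le> f u \<bullet> u" using max by simp
  then have "f u = (f u \<bullet> u) *\<^sub>R u"
    using u by (intro rayleigh_maximizer_is_eigenvector) simp_all
  moreover have "u \<in> S" "u \<noteq> 0" using u by auto
  ultimately show ?thesis using that by blast
qed

definition eigenspace :: "real \<Rightarrow> 'a set" where
  "eigenspace c = {x\<in>S. f x = c *\<^sub>R x}"

lemma eig_mult_eq_dim_eigenspace: "eig_mult f S c = dim (eigenspace c)"
  by (simp add: eig_mult_def eigenspace_def)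

lemma subspace_eigenspace: "subspace (eigenspace c)"
  using subspace unfolding eigenspace_def subspace_def
  by (auto simp: linear_add[OF linear] linear_scale[OF linear] linear_0[OF linear] algebra_simps)

lemma eigenspace_subset: "eigenspace c \<subseteq> S"
  by (auto simp: eigenspace_def)

lemma eigenvalue_iff_eigenspace_nontrivial: "c \<in> eigenvalues_on f S \<longleftrightarrow> eigenspace c \<noteq> {0}"
  using subspace_0[OF subspace_eigenspace[of c]]
  by (auto simp: eigenvalues_on_def eigenspace_def)

lemma eigenspaces_orthogonal:
  assumes "c \<noteq> d" "x \<in> eigenspace c" "y \<in> eigenspace d"
  shows "x \<bullet> y = 0"
proof -
  have "c * (x \<bullet> y) = f x \<bullet> y" using assms(2) by (simp add: eigenspace_def)
  also have "\<dots> = x \<bullet> f y" by (rule symmetric) (use assms(2,3) eigenspace_subset in auto)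
  also have "\<dots> = d * (x \<bullet> y)" using assms(3) by (simp add: eigenspace_def)
  finally show ?thesis using assms(1) by simp
qed

lemma eigenspace_orthogonal_span:
  assumes "d \<notin> C" "x \<in> eigenspace d" "y \<in> span (\<Union>c\<in>C. eigenspace c)"
  shows "x \<bullet> y = 0"
proof -
  have "orthogonal x y"
  proof (rule orthogonal_to_span[OF assms(3)])
    fix z assume "z \<in> (\<Union>c\<in>C. eigenspace c)"
    then obtain c where "c \<in> C" "z \<in> eigenspace c" by blast
    moreover from this have "d \<noteq> c" using assms(1) by blast
    ultimately show "orthogonal x z"
      using eigenspaces_orthogonal assms(2) by (simp add: orthogonal_def)
  qed
  then show ?thesis by (simp add: orthogonal_def)
qed

lemma span_eigenspaces_subset: "span (\<Union>c\<in>C. eigenspace c) \<subseteq> S"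
  using eigenspace_subset subspace by (intro span_minimal) auto

lemma span_eigenspaces_insert:
  "span (\<Union>c\<in>insert d C. eigenspace c)
    = {x + y |x y. x \<in> eigenspace d \<and> y \<in> span (\<Union>c\<in>C. eigenspace c)}"
proof -
  have e: "span (eigenspace d) = eigenspace d" using subspace_eigenspace by simp
  show ?thesis using span_Un[of "eigenspace d" "\<Union>c\<in>C. eigenspace c", unfolded e] by simp
qed

lemma finite_eigenvalues: "finite (eigenvalues_on f S)"
proof -
  let ?ev = "eigenvalues_on f S"
  have "\<forall>c\<in>?ev. \<exists>x. x \<in> eigenspace c \<and> x \<noteq> 0"
    by (auto simp: eigenvalues_on_def eigenspace_def)
  then obtain u where u: "\<forall>c\<in>?ev. u c \<in> eigenspace c \<and> u c \<noteq> 0"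
    by (rule bchoice[elim_format]) blast
  have "independent (u ` ?ev)"
  proof (rule pairwise_orthogonal_independent)
    show "pairwise orthogonal (u ` ?ev)"
      unfolding pairwise_def orthogonal_def
    proof clarify
      fix c d assume "c \<in> ?ev" "d \<in> ?ev" "u c \<noteq> u d"
      then show "u c \<bullet> u d = 0" using u eigenspaces_orthogonal by metis
    qed
    show "0 \<notin> u ` ?ev" using u by auto
  qed
  then have "finite (u ` ?ev)" using independent_bound by blast
  moreover have "inj_on u ?ev"
  proof (rule inj_onI)
    fix c d assume cd: "c \<in> ?ev" "d \<in> ?ev" "u c = u d"
    show "c = d"
    proof (rule ccontr)
      assume "c \<noteq> d"
      then have "u c \<bullet> u d = 0" using u cd eigenspaces_orthogonal by blast
      then show False using u cd by simp
    qed
  qed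
  ultimately show ?thesis using finite_imageD by blast
qed

lemma dim_span_eigenspaces:
  assumes "finite C"
  shows "dim (span (\<Union>c\<in>C. eigenspace c)) = (\<Sum>c\<in>C. dim (eigenspace c))"
  using assms
proof (induction C rule: finite_induct)
  case (insert d C)
  have "eigenspace d \<inter> span (\<Union>c\<in>C. eigenspace c) = {0}"
    using eigenspace_orthogonal_span[OF insert(2)] subspace_0[OF subspace_eigenspace] span_0
    by fastforce
  moreover have "dim (span (\<Union>c\<in>insert d C. eigenspace c))
      + dim (eigenspace d \<inter> span (\<Union>c\<in>C. eigenspace c))
      = dim (eigenspace d) + dim (span (\<Union>c\<in>C. eigenspace c))"
    unfolding span_eigenspaces_insert by (rule dim_sums_Int[OF subspace_eigenspace subspace_span])
  ultimately show ?case using insert.IH insert.hyps by simp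
qed simp

lemma span_eigenspaces_invariant:
  assumes "v \<in> span (\<Union>c\<in>C. eigenspace c)"
  shows "f v \<in> span (\<Union>c\<in>C. eigenspace c)"
proof -
  have "f ` (\<Union>c\<in>C. eigenspace c) \<subseteq> (\<Union>c\<in>C. eigenspace c)"
    using subspace_scale[OF subspace_eigenspace] by (fastforce simp: eigenspace_def)
  then have "f ` span (\<Union>c\<in>C. eigenspace c) \<subseteq> span (\<Union>c\<in>C. eigenspace c)"
    unfolding span_linear_image[OF linear, symmetric] by (rule span_mono)
  then show ?thesis using assms by blast
qed

lemma selfadjoint_on_orthogonal_complement:
  assumes "subspace V" "V \<subseteq> S" "\<And>v. v \<in> V \<Longrightarrow> f v \<in> V"
  shows "selfadjoint_on {w\<in>S. \<forall>v\<in>V. w \<bullet> v = 0} f"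
proof (rule selfadjoint_on_invariant_subspace)
  show "subspace {w\<in>S. \<forall>v\<in>V. w \<bullet> v = 0}"
    unfolding subspace_def using subspace
    by (auto simp: subspace_0 subspace_add subspace_scale inner_add_left)
  fix w assume w: "w \<in> {w\<in>S. \<forall>v\<in>V. w \<bullet> v = 0}"
  have "f w \<bullet> v = w \<bullet> f v" if "v \<in> V" for v
    using w that assms(2) by (intro symmetric) auto
  then show "f w \<in> {w\<in>S. \<forall>v\<in>V. w \<bullet> v = 0}" using w assms(3) maps_to by auto
qed auto

theorem span_eigenspaces_eq: "span (\<Union>c\<in>eigenvalues_on f S. eigenspace c) = S"
proof (rule ccontr)
  let ?V = "span (\<Union>c\<in>eigenvalues_on f S. eigenspace c)"
  define W where "W = {w\<in>S. \<forall>v\<in>?V. w \<bullet> v = 0}"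
  assume "?V \<noteq> S"
  then obtain x where x: "x \<in> S" "x \<notin> ?V" using span_eigenspaces_subset by blast
  obtain y z where yz: "y \<in> ?V" "\<And>v. v \<in> ?V \<Longrightarrow> orthogonal z v" "x = y + z"
    using orthogonal_subspace_decomp_exists[of ?V x] unfolding span_span by blast
  have "z \<in> S" using subspace_diff[OF subspace x(1), of y] yz span_eigenspaces_subset by auto
  then have "z \<in> W" "z \<noteq> 0" using yz x(2) by (auto simp: W_def orthogonal_def)
  \<comment> \<open>The orthogonal complement W of ?V in S is f-invariant, so it contains an eigenvector.\<close>
  have "selfadjoint_on W f"
    unfolding W_def using span_eigenspaces_subset span_eigenspaces_invariant
    by (intro selfadjoint_on_orthogonal_complement) auto
  moreover have "W \<noteq> {0}" using \<open>z \<in> W\<close> \<open>z \<noteq> 0\<close> by blast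
  ultimately obtain u c where u: "u \<in> W" "u \<noteq> 0" "f u = c *\<^sub>R u"
    by (rule selfadjoint_on.exists_eigenvector)
  then have "u \<in> eigenspace c" "u \<in> S" by (auto simp: W_def eigenspace_def)
  then have "u \<in> ?V"
    using u(2) by (intro span_base) (auto simp: eigenvalues_on_def eigenspace_def)
  then show False using u(1,2) by (auto simp: W_def)
qed

lemma dim_eq_sum_eig_mult: "dim S = (\<Sum>c\<in>eigenvalues_on f S. eig_mult f S c)"
  using dim_span_eigenspaces[OF finite_eigenvalues] span_eigenspaces_eq
  by (simp add: eig_mult_eq_dim_eigenspace)

lemma n_neg_add_n_zero_add_n_pos: "n_neg f S + n_zero f S + n_pos f S = dim S"
proof -
  let ?ev = "eigenvalues_on f S" and ?m = "eig_mult f S"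
  have "(\<Sum>c\<in>{c\<in>?ev. c = 0}. ?m c) = ?m 0"
  proof (cases "0 \<in> ?ev")
    case True
    then have "{c\<in>?ev. c = 0} = {0}" by auto
    then show ?thesis by simp
  next
    case False
    then show ?thesis
      by (simp add: eigenvalue_iff_eigenspace_nontrivial eig_mult_eq_dim_eigenspace)
  qed
  moreover have "(\<Sum>c\<in>?ev. ?m c)
      = (\<Sum>c\<in>{c\<in>?ev. c < 0}. ?m c) + ((\<Sum>c\<in>{c\<in>?ev. c = 0}. ?m c) + (\<Sum>c\<in>{c\<in>?ev. 0 < c}. ?m c))"
  proof -
    let ?A = "{c\<in>?ev. c < 0}" and ?Z = "{c\<in>?ev. c = 0}" and ?B = "{c\<in>?ev. 0 < c}"
    have fin: "finite {c\<in>?ev. P c}" for P using finite_eigenvalues by simp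
    have "?ev = ?A \<union> (?Z \<union> ?B)" by auto
    then have "sum ?m ?ev = sum ?m (?A \<union> (?Z \<union> ?B))" by (rule arg_cong)
    also have "\<dots> = sum ?m ?A + sum ?m (?Z \<union> ?B)"
      by (rule sum.union_disjoint[OF fin finite_UnI[OF fin fin]]) auto
    also have "sum ?m (?Z \<union> ?B) = sum ?m ?Z + sum ?m ?B"
      by (rule sum.union_disjoint[OF fin fin]) auto
    finally show ?thesis .
  qed
  ultimately show ?thesis
    by (simp add: dim_eq_sum_eig_mult n_neg_def n_zero_def n_pos_def)
qed

lemma form_pos_on_span_eigenspaces:
  assumes "finite C" "\<forall>c\<in>C. 0 < s * c" "x \<in> span (\<Union>c\<in>C. eigenspace c)" "x \<noteq> 0"
  shows "0 < s * (f x \<bullet> x)"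
  using assms
proof (induction C arbitrary: x rule: finite_induct)
  case empty
  then show ?case by simp
next
  case (insert d C)
  obtain a b where ab: "x = a + b" "a \<in> eigenspace d" "b \<in> span (\<Union>c\<in>C. eigenspace c)"
    using insert.prems(2) span_eigenspaces_insert by blast
  have "a \<in> S" "b \<in> S" using ab eigenspace_subset span_eigenspaces_subset by blast+
  have "a \<bullet> b = 0" using eigenspace_orthogonal_span[OF insert.hyps(2) ab(2,3)] .
  moreover have "f a = d *\<^sub>R a" using ab(2) by (simp add: eigenspace_def)
  moreover have "f b \<bullet> a = b \<bullet> f a" using \<open>a \<in> S\<close> \<open>b \<in> S\<close> symmetric by blast
  ultimately have form: "s * (f x \<bullet> x) = (s * d) * (a \<bullet> a) + s * (f b \<bullet> b)"
    unfolding ab(1) by (simp add: linear_add[OF linear] inner_add_left inner_add_right inner_commute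
        algebra_simps)
  have sd: "0 < s * d" using insert.prems(1) by simp
  have "0 \<le> s * (f b \<bullet> b)"
    using insert.IH[of b] insert.prems(1) ab(3) by (cases "b = 0") (auto simp: linear_0[OF linear])
  moreover have "0 < s * d * (a \<bullet> a) \<or> 0 < s * (f b \<bullet> b)"
    using insert.IH[of b] insert.prems ab sd by (cases "a = 0") auto
  moreover have "0 \<le> s * d * (a \<bullet> a)" using sd by simp
  ultimately show ?case unfolding form by linarith
qed

lemma dim_span_eigenspaces_add_le:
  assumes "finite C" "\<forall>c\<in>C. 0 < s * c"
    and "subspace U" "U \<subseteq> S" "\<forall>x\<in>U. s * (f x \<bullet> x) \<le> 0"
  shows "dim (span (\<Union>c\<in>C. eigenspace c)) + dim U \<le> dim S"
proof -
  let ?N = "span (\<Union>c\<in>C. eigenspace c)"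
  have "?N \<inter> U = {0}"
    using form_pos_on_span_eigenspaces[OF assms(1,2)] assms(3,5) span_0 subspace_0
    by fastforce
  then have "dim {x + y |x y. x \<in> ?N \<and> y \<in> U} = dim ?N + dim U"
    using dim_sums_Int[OF subspace_span assms(3), of "\<Union>c\<in>C. eigenspace c"] by (simp del: dim_span)
  moreover have "{x + y |x y. x \<in> ?N \<and> y \<in> U} \<subseteq> S"
    using span_eigenspaces_subset assms(4) subspace by (auto intro: subspace_add)
  then have "dim {x + y |x y. x \<in> ?N \<and> y \<in> U} \<le> dim S" by (rule dim_subset)
  ultimately show ?thesis by linarith
qed

lemma n_neg_add_dim_le:
  assumes "subspace U" "U \<subseteq> S" "\<forall>x\<in>U. 0 \<le> f x \<bullet> x"
  shows "n_neg f S + dim U \<le> dim S"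
proof -
  let ?C = "{c\<in>eigenvalues_on f S. c < 0}"
  have "dim (span (\<Union>c\<in>?C. eigenspace c)) + dim U \<le> dim S"
    using assms finite_eigenvalues by (intro dim_span_eigenspaces_add_le[where s = "-1"]) auto
  then show ?thesis
    using finite_eigenvalues
    by (simp add: dim_span_eigenspaces n_neg_def eig_mult_eq_dim_eigenspace del: dim_span)
qed

lemma n_pos_add_dim_le:
  assumes "subspace U" "U \<subseteq> S" "\<forall>x\<in>U. f x \<bullet> x \<le> 0"
  shows "n_pos f S + dim U \<le> dim S"
proof -
  let ?C = "{c\<in>eigenvalues_on f S. 0 < c}"
  have "dim (span (\<Union>c\<in>?C. eigenspace c)) + dim U \<le> dim S"
    using assms finite_eigenvalues by (intro dim_span_eigenspaces_add_le[where s = 1]) auto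
  then show ?thesis
    using finite_eigenvalues
    by (simp add: dim_span_eigenspaces n_pos_def eig_mult_eq_dim_eigenspace del: dim_span)
qed

text \<open>A null vector of a semidefinite form is a minimum, so the form's gradient there vanishes.\<close>

lemma form_null_vector_orthogonal:
  assumes "subspace U" "U \<subseteq> S" "s \<noteq> 0" "\<forall>y\<in>U. 0 \<le> s * (f y \<bullet> y)"
    and "x \<in> U" "f x \<bullet> x = 0" "y \<in> U"
  shows "f x \<bullet> y = 0"
proof -
  have "0 \<le> 2 * t * (s * (f x \<bullet> y)) + t\<^sup>2 * (s * (f y \<bullet> y))" for t
  proof -
    have "x + t *\<^sub>R y \<in> U" using assms(1,5,7) by (simp add: subspace_add subspace_scale)
    then have "0 \<le> s * (f (x + t *\<^sub>R y) \<bullet> (x + t *\<^sub>R y))" using assms(4) by blast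
    then show ?thesis
      using assms(2,5,6,7) by (subst (asm) form_add_scaled) (auto simp: algebra_simps)
  qed
  then have "s * (f x \<bullet> y) = 0" by (rule quadratic_nonneg_imp_linear_coeff_zero)
  then show ?thesis using assms(3) by simp
qed

end

section \<open>Inertia of a semidefinite splitting\<close>

locale semidefinite_splitting = selfadjoint_on +
  fixes P M :: "'a set"
  assumes subspace_P: "subspace P" and subspace_M: "subspace M"
    and sum_eq: "S = {a + b |a b. a \<in> P \<and> b \<in> M}"
    and form_nonneg: "x \<in> P \<Longrightarrow> 0 \<le> f x \<bullet> x"
    and form_nonpos: "x \<in> M \<Longrightarrow> f x \<bullet> x \<le> 0"
    and null_P: "x \<in> P \<Longrightarrow> f x \<bullet> x = 0 \<Longrightarrow> x \<in> M"
    and null_M: "x \<in> M \<Longrightarrow> f x \<bullet> x = 0 \<Longrightarrow> x \<in> P"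
begin

lemma P_subset: "P \<subseteq> S"
  using subspace_0[OF subspace_M] by (force simp: sum_eq)

lemma M_subset: "M \<subseteq> S"
  using subspace_0[OF subspace_P] by (force simp: sum_eq)

lemma dim_add_dim_Int: "dim S + dim (P \<inter> M) = dim P + dim M"
  unfolding sum_eq by (rule dim_sums_Int[OF subspace_P subspace_M])

lemma eigenspace_0_subset_Int: "eigenspace 0 \<subseteq> P \<inter> M"
proof
  fix x assume "x \<in> eigenspace 0"
  then have "x \<in> S" "f x = 0" by (auto simp: eigenspace_def)
  then obtain a b where ab: "x = a + b" "a \<in> P" "b \<in> M" using sum_eq by blast
  then have "a \<in> S" "b \<in> S" using P_subset M_subset by auto
  \<comment> \<open>Testing f x = 0 against a - b separates the two semidefinite parts.\<close>
  have "f b \<bullet> a = f a \<bullet> b" using symmetric[OF \<open>b \<in> S\<close> \<open>a \<in> S\<close>] by (simp add: inner_commute)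
  then have "f x \<bullet> (a - b) = f a \<bullet> a - f b \<bullet> b"
    unfolding ab(1) by (simp add: linear_add[OF linear] inner_add_left inner_diff_right)
  then have "f a \<bullet> a = f b \<bullet> b" using \<open>f x = 0\<close> by simp
  then have "f a \<bullet> a = 0" "f b \<bullet> b = 0"
    using form_nonneg[OF ab(2)] form_nonpos[OF ab(3)] by linarith+
  then have "a \<in> P \<inter> M" "b \<in> P \<inter> M" using ab null_P null_M by auto
  then show "x \<in> P \<inter> M"
    using ab(1) subspace_P subspace_M by (auto intro: subspace_add)
qed

lemma Int_subset_eigenspace_0: "P \<inter> M \<subseteq> eigenspace 0"
proof
  fix x assume x: "x \<in> P \<inter> M"
  have x0: "f x \<bullet> x = 0"
    using form_nonneg[of x] form_nonpos[of x] x by (intro order.antisym) auto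
  have "\<forall>y\<in>P. 0 \<le> 1 * (f y \<bullet> y)" "\<forall>y\<in>M. 0 \<le> -1 * (f y \<bullet> y)"
    using form_nonneg form_nonpos by auto
  then have "f x \<bullet> y = 0" if "y \<in> P \<or> y \<in> M" for y
    using that x
      form_null_vector_orthogonal[OF subspace_P P_subset one_neq_zero _ _ x0, of y]
      form_null_vector_orthogonal[OF subspace_M M_subset _ _ _ x0, of "-1" y]
    by auto
  then have "f x \<bullet> y = 0" if "y \<in> S" for y
    using that sum_eq by (auto simp: inner_add_right)
  moreover have "x \<in> S" using x P_subset by blast
  ultimately have "f x \<bullet> f x = 0" using maps_to by blast
  then have "f x = 0" by simp
  then show "x \<in> eigenspace 0" using x P_subset by (auto simp: eigenspace_def)
qed

lemma eigenspace_0_eq: "eigenspace 0 = P \<inter> M"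
  using eigenspace_0_subset_Int Int_subset_eigenspace_0 by blast

lemma n_zero_eq: "n_zero f S = dim (P \<inter> M)"
  by (simp add: n_zero_def eig_mult_eq_dim_eigenspace eigenspace_0_eq)

lemma n_neg_eq: "n_neg f S = dim M - dim (P \<inter> M)"
  and n_pos_eq: "n_pos f S = dim P - dim (P \<inter> M)"
proof -
  have "n_neg f S + dim P \<le> dim S"
    using subspace_P P_subset form_nonneg by (intro n_neg_add_dim_le) auto
  moreover have "n_pos f S + dim M \<le> dim S"
    using subspace_M M_subset form_nonpos by (intro n_pos_add_dim_le) auto
  moreover note n_neg_add_n_zero_add_n_pos n_zero_eq dim_add_dim_Int
  ultimately show "n_neg f S = dim M - dim (P \<inter> M)" "n_pos f S = dim P - dim (P \<inter> M)"
    by linarith+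
qed

end

section \<open>The compressed signed Laplacian\<close>

lemma selfadjoint_on_compression:
  fixes A :: "real^'n::finite^'n"
  assumes "subspace S" "transpose A = A"
  shows "selfadjoint_on S (\<lambda>x. orth_proj S (A *v x))"
proof (rule selfadjoint_on.intro)
  show "linear (\<lambda>x. orth_proj S (A *v x))"
    using linear_compose[OF matrix_vector_mul_linear linear_orth_proj[OF assms(1)]]
    by (simp add: o_def)
  show "orth_proj S (A *v x) \<in> S" for x using orth_proj(1)[OF assms(1)] .
  fix x y assume "x \<in> S" "y \<in> S"
  have "orth_proj S (A *v x) \<bullet> y = (A *v x) \<bullet> y"
    using inner_orth_proj_left[OF assms(1) \<open>y \<in> S\<close>] .
  also have "\<dots> = x \<bullet> (A *v y)"
    by (metis assms(2) dot_lmul_matrix transpose_matrix_vector)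
  also have "\<dots> = x \<bullet> orth_proj S (A *v y)"
    using inner_orth_proj_left[OF assms(1) \<open>x \<in> S\<close>] by (simp add: inner_commute)
  finally show "orth_proj S (A *v x) \<bullet> y = x \<bullet> orth_proj S (A *v y)" .
qed (fact assms(1))

lemma laplacian_mult_nth:
  "(signed_laplacian \<gamma> *v x) $ i = (\<Sum>j\<in>UNIV. \<gamma> i j * (x$j - x$i))"
proof -
  have "(signed_laplacian \<gamma> *v x) $ i
      = - (\<Sum>j\<in>UNIV - {i}. \<gamma> i j) * x$i + (\<Sum>j\<in>UNIV - {i}. \<gamma> i j * x$j)"
    by (simp add: matrix_vector_mult_def signed_laplacian_def sum.remove[of UNIV i] if_distrib
        cong: if_cong)
  also have "\<dots> = (\<Sum>j\<in>UNIV - {i}. \<gamma> i j * (x$j - x$i))"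
    by (simp add: sum_subtractf right_diff_distrib sum_distrib_right)
  also have "\<dots> = (\<Sum>j\<in>UNIV. \<gamma> i j * (x$j - x$i))"
    by (simp add: sum.remove[of UNIV i])
  finally show ?thesis .
qed

lemma transpose_signed_laplacian:
  assumes "signed_graph \<gamma>"
  shows "transpose (signed_laplacian \<gamma>) = signed_laplacian \<gamma>"
  using assms unfolding signed_graph_def transpose_def signed_laplacian_def vec_eq_iff by auto

lemma laplacian_form:
  assumes "signed_graph \<gamma>"
  shows "2 * ((signed_laplacian \<gamma> *v x) \<bullet> x) = (\<Sum>i\<in>UNIV. \<Sum>j\<in>UNIV. - \<gamma> i j * (x$i - x$j)\<^sup>2)"
proof -
  have sym: "\<gamma> i j = \<gamma> j i" for i j using assms by (simp add: signed_graph_def)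
  define T where "T = (\<Sum>i\<in>UNIV. \<Sum>j\<in>UNIV. \<gamma> i j * (x$j - x$i) * x$i)"
  have "(signed_laplacian \<gamma> *v x) \<bullet> x = T"
    unfolding T_def inner_vec_def by (simp add: laplacian_mult_nth sum_distrib_right)
  moreover have "T = (\<Sum>i\<in>UNIV. \<Sum>j\<in>UNIV. \<gamma> i j * (x$i - x$j) * x$j)"
    unfolding T_def by (subst sum.swap) (simp add: sym)
  ultimately have "2 * ((signed_laplacian \<gamma> *v x) \<bullet> x)
      = (\<Sum>i\<in>UNIV. \<Sum>j\<in>UNIV. \<gamma> i j * (x$j - x$i) * x$i + \<gamma> i j * (x$i - x$j) * x$j)"
    unfolding T_def by (simp add: sum.distrib)
  also have "\<dots> = (\<Sum>i\<in>UNIV. \<Sum>j\<in>UNIV. - \<gamma> i j * (x$i - x$j)\<^sup>2)"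
    by (intro sum.cong refl) (simp add: power2_eq_square algebra_simps)
  finally show ?thesis .
qed

definition constant_on_edges :: "('n::finite \<Rightarrow> 'n \<Rightarrow> bool) \<Rightarrow> (real^'n) set" where
  "constant_on_edges E = {x. \<forall>i j. E i j \<longrightarrow> x$i = x$j}"

lemma subspace_constant_on_edges: "subspace (constant_on_edges E)"
  by (auto simp: subspace_def constant_on_edges_def)

lemma laplacian_form_nonneg:
  assumes "signed_graph \<gamma>" "x \<in> constant_on_edges (pos_edges \<gamma>)"
  shows "0 \<le> (signed_laplacian \<gamma> *v x) \<bullet> x"
    and "(signed_laplacian \<gamma> *v x) \<bullet> x = 0 \<Longrightarrow> x \<in> constant_on_edges (neg_edges \<gamma>)"
proof -
  have term_nonneg: "0 \<le> - \<gamma> i j * (x$i - x$j)\<^sup>2" for i j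
    using assms(2) by (cases "0 < \<gamma> i j")
      (auto simp: constant_on_edges_def pos_edges_def mult_nonpos_nonneg)
  then have row_nonneg: "0 \<le> (\<Sum>j\<in>UNIV. - \<gamma> i j * (x$i - x$j)\<^sup>2)" for i
    by (simp add: sum_nonneg)
  show "0 \<le> (signed_laplacian \<gamma> *v x) \<bullet> x"
    using laplacian_form[OF assms(1), of x] row_nonneg sum_nonneg[of UNIV] by (smt (verit))
  assume "(signed_laplacian \<gamma> *v x) \<bullet> x = 0"
  then have "(\<Sum>i\<in>UNIV. \<Sum>j\<in>UNIV. - \<gamma> i j * (x$i - x$j)\<^sup>2) = 0"
    using laplacian_form[OF assms(1), of x] by simp
  then have "- \<gamma> i j * (x$i - x$j)\<^sup>2 = 0" for i j
    using row_nonneg term_nonneg by (simp add: sum_nonneg_eq_0_iff)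
  then have "x$i = x$j" if "\<gamma> i j < 0" for i j
    using that by (metis less_irrefl mult_eq_0_iff neg_equal_0_iff_equal power_eq_0_iff
        right_minus_eq)
  then show "x \<in> constant_on_edges (neg_edges \<gamma>)"
    by (simp add: constant_on_edges_def neg_edges_def)
qed

lemma signed_graph_uminus: "signed_graph \<gamma> \<Longrightarrow> signed_graph (- \<gamma>)"
  by (simp add: signed_graph_def)

lemma pos_edges_uminus: "pos_edges (- \<gamma>) = neg_edges \<gamma>"
  and neg_edges_uminus: "neg_edges (- \<gamma>) = pos_edges \<gamma>"
  by (simp_all add: fun_eq_iff pos_edges_def neg_edges_def)

lemma laplacian_form_uminus:
  assumes "signed_graph \<gamma>"
  shows "(signed_laplacian (- \<gamma>) *v x) \<bullet> x = - ((signed_laplacian \<gamma> *v x) \<bullet> x)"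
  using laplacian_form[OF assms, of x] laplacian_form[OF signed_graph_uminus[OF assms], of x]
  by (simp add: sum_negf)

lemma laplacian_form_nonpos:
  assumes "signed_graph \<gamma>" "x \<in> constant_on_edges (neg_edges \<gamma>)"
  shows "(signed_laplacian \<gamma> *v x) \<bullet> x \<le> 0"
    and "(signed_laplacian \<gamma> *v x) \<bullet> x = 0 \<Longrightarrow> x \<in> constant_on_edges (pos_edges \<gamma>)"
  using laplacian_form_nonneg[OF signed_graph_uminus[OF assms(1)], of x] assms(2)
  by (simp_all add: laplacian_form_uminus[OF assms(1)] pos_edges_uminus neg_edges_uminus)

section \<open>Components and vectors constant along edges\<close>

definition linked :: "('n \<Rightarrow> 'n \<Rightarrow> bool) \<Rightarrow> ('n \<times> 'n) set" where
  "linked E = {(i, j). (symclp E)\<^sup>*\<^sup>* i j}"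

lemma components_eq_quotient: "components E = UNIV // linked E"
  by (auto simp: components_def linked_def quotient_def symclp_def[abs_def] Image_def)

lemma equiv_linked: "equiv UNIV (linked E)"
  by (simp add: linked_def equivp_equiv)

lemma component_containing:
  obtains C where "C \<in> components E" "k \<in> C" "\<And>D. D \<in> components E \<Longrightarrow> k \<in> D \<Longrightarrow> D = C"
proof -
  have "k \<in> \<Union>(components E)"
    using Union_quotient[OF equiv_linked, of E] by (simp only: components_eq_quotient) simp
  then obtain C where "C \<in> components E" "k \<in> C" by blast
  moreover have "D = C" if "D \<in> components E" "k \<in> D" for D
    using quotient_disj[OF equiv_linked, of D E C] that \<open>C \<in> components E\<close> \<open>k \<in> C\<close>
    by (auto simp: components_eq_quotient)
  ultimately show ?thesis using that by blast
qed

lemma constant_on_edges_linked: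
  assumes "x \<in> constant_on_edges E" "(i, j) \<in> linked E"
  shows "x$i = x$j"
proof -
  have "(symclp E)\<^sup>*\<^sup>* i j" using assms(2) by (simp add: linked_def)
  then show ?thesis
  proof (induction rule: rtranclp_induct)
    case (step j k)
    then show ?case using assms(1) by (auto simp: constant_on_edges_def symclp_def)
  qed simp
qed

lemma char_vec_component_constant_on_edges:
  assumes "C \<in> components E"
  shows "char_vec C \<in> constant_on_edges E"
proof -
  have "i \<in> C \<longleftrightarrow> j \<in> C" if "E i j" for i j
  proof -
    have "(i, j) \<in> linked E" "(j, i) \<in> linked E"
      using symclpI1[of E, OF that] symclpI2[of E, OF that] by (auto simp: linked_def)
    then show ?thesis
      using in_quotient_imp_closed[OF equiv_linked assms[unfolded components_eq_quotient]] by blast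
  qed
  then show ?thesis by (auto simp: constant_on_edges_def char_vec_def)
qed

lemma constant_on_edges_eq_sum_char_vec:
  assumes "x \<in> constant_on_edges E"
  shows "x = (\<Sum>C\<in>components E. x $ (SOME i. i \<in> C) *\<^sub>R char_vec C)"
proof (subst vec_eq_iff, intro allI)
  fix k
  let ?rep = "\<lambda>C. SOME i. i \<in> C"
  obtain C0 where C0: "C0 \<in> components E" "k \<in> C0"
    and unique: "\<And>D. D \<in> components E \<Longrightarrow> k \<in> D \<Longrightarrow> D = C0"
    using component_containing[of E k] by blast
  have "(\<Sum>C\<in>components E. x $ ?rep C *\<^sub>R char_vec C) $ k
      = (\<Sum>C\<in>components E. if k \<in> C then x $ ?rep C else 0)"
    unfolding sum_component by (intro sum.cong) (simp_all add: char_vec_def)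
  also have "\<dots> = (\<Sum>C\<in>{C\<in>components E. k \<in> C}. x $ ?rep C)"
    by (rule sum.inter_filter[symmetric]) (simp add: components_eq_quotient)
  also have "{C\<in>components E. k \<in> C} = {C0}" using C0 unique by blast
  also have "(\<Sum>C\<in>{C0}. x $ ?rep C) = x $ k"
  proof -
    have "?rep C0 \<in> C0" using C0(2) by (rule someI)
    then have "(k, ?rep C0) \<in> linked E"
      using C0 by (intro in_quotient_imp_in_rel[OF equiv_linked])
        (simp_all add: components_eq_quotient)
    then show ?thesis using constant_on_edges_linked[OF assms] by simp
  qed
  finally show "x $ k = (\<Sum>C\<in>components E. x $ ?rep C *\<^sub>R char_vec C) $ k" by simp
qed

lemma span_char_vec_components: "span (char_vec ` components E) = constant_on_edges E"
proof
  show "span (char_vec ` components E) \<subseteq> constant_on_edges E"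
    using char_vec_component_constant_on_edges
    by (intro span_minimal[OF _ subspace_constant_on_edges]) blast
  show "constant_on_edges E \<subseteq> span (char_vec ` components E)"
  proof
    fix x assume "x \<in> constant_on_edges E"
    then have "x = (\<Sum>C\<in>components E. x $ (SOME i. i \<in> C) *\<^sub>R char_vec C)"
      by (rule constant_on_edges_eq_sum_char_vec)
    also have "\<dots> \<in> span (char_vec ` components E)"
      by (intro span_sum span_scale span_base) simp
    finally show "x \<in> span (char_vec ` components E)" .
  qed
qed

lemma inj_char_vec: "inj (char_vec :: 'n::finite set \<Rightarrow> real^'n)"
proof (rule injI)
  fix C D :: "'n set" assume "char_vec C = char_vec D"
  then have "char_vec C $ i = char_vec D $ i" for i by simp
  then have eq: "(if i \<in> C then 1 else 0 :: real) = (if i \<in> D then 1 else 0)" for i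
    by (simp add: char_vec_def)
  have "i \<in> C \<longleftrightarrow> i \<in> D" for i
    using eq[of i] by (cases "i \<in> C"; cases "i \<in> D") simp_all
  then show "C = D" by blast
qed

lemma dim_span_char_vec_components: "dim (span (char_vec ` components E)) = num_components E"
proof -
  have "independent (char_vec ` components E)"
  proof (rule pairwise_orthogonal_independent)
    show "pairwise orthogonal (char_vec ` components E)"
      unfolding pairwise_def orthogonal_def
    proof clarify
      fix C D assume CD: "C \<in> components E" "D \<in> components E" "char_vec C \<noteq> char_vec D"
      then have "C \<inter> D = {}"
        using quotient_disj[OF equiv_linked] by (auto simp: components_eq_quotient)
      then show "char_vec C \<bullet> char_vec D = 0"
        unfolding inner_vec_def char_vec_def by (intro sum.neutral) auto
    qed
    show "0 \<notin> char_vec ` components E"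
    proof
      assume "0 \<in> char_vec ` components E"
      then obtain C where C: "C \<in> components E" "char_vec C = 0" by auto
      then obtain i where "i \<in> C"
        using in_quotient_imp_non_empty[OF equiv_linked] by (auto simp: components_eq_quotient)
      then have "char_vec C $ i = 1" by (simp add: char_vec_def)
      then show False using C(2) by simp
    qed
  qed
  then have "dim (span (char_vec ` components E)) = card (char_vec ` components E)"
    by (rule dim_span_eq_card_independent)
  also have "\<dots> = card (components E)"
    by (rule card_image[OF inj_on_subset[OF inj_char_vec subset_UNIV]])
  finally show ?thesis by (simp add: num_components_def)
qed

lemma num_components_connected:
  assumes "connected_graph E"
  shows "num_components E = 1"
proof -
  have "components E = {UNIV}"
    using assms by (auto simp: components_def connected_graph_def)
  then show ?thesis by (simp add: num_components_def)
qed

lemma S_fixed_eq_sum: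
  "S_fixed \<gamma>
    = {a + b |a b. a \<in> constant_on_edges (pos_edges \<gamma>) \<and> b \<in> constant_on_edges (neg_edges \<gamma>)}"
  unfolding S_fixed_def image_Un span_Un span_char_vec_components ..

lemma constant_on_pos_neg_edges:
  "constant_on_edges (pos_edges \<gamma>) \<inter> constant_on_edges (neg_edges \<gamma>)
    = constant_on_edges (all_edges \<gamma>)"
  by (auto simp: constant_on_edges_def pos_edges_def neg_edges_def all_edges_def neq_iff)

lemma semidefinite_splitting_compressed_laplacian:
  assumes "signed_graph \<gamma>"
  shows "semidefinite_splitting (S_fixed \<gamma>) (compressed_op \<gamma> (S_fixed \<gamma>))
    (constant_on_edges (pos_edges \<gamma>)) (constant_on_edges (neg_edges \<gamma>))"
proof -
  let ?S = "S_fixed \<gamma>" and ?L = "signed_laplacian \<gamma>"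
  let ?P = "constant_on_edges (pos_edges \<gamma>)" and ?M = "constant_on_edges (neg_edges \<gamma>)"
  have sub: "subspace ?S" by (simp add: S_fixed_def)
  have op: "compressed_op \<gamma> ?S = (\<lambda>x. orth_proj ?S (?L *v x))"
    by (simp add: fun_eq_iff compressed_op_def)
  have "?P \<subseteq> ?S" "?M \<subseteq> ?S"
    unfolding S_fixed_def image_Un span_char_vec_components[symmetric] by (simp_all add: span_mono)
  then have form: "compressed_op \<gamma> ?S x \<bullet> x = (?L *v x) \<bullet> x" if "x \<in> ?P \<union> ?M" for x
    using inner_orth_proj_left[OF sub] that by (auto simp: compressed_op_def)
  show ?thesis
  proof (intro semidefinite_splitting.intro semidefinite_splitting_axioms.intro)
    show "selfadjoint_on ?S (compressed_op \<gamma> ?S)"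
      unfolding op using sub transpose_signed_laplacian[OF assms]
      by (rule selfadjoint_on_compression)
    show "subspace ?P" "subspace ?M" by (fact subspace_constant_on_edges)+
    show "?S = {a + b |a b. a \<in> ?P \<and> b \<in> ?M}" by (rule S_fixed_eq_sum)
    fix x
    show "x \<in> ?P \<Longrightarrow> 0 \<le> compressed_op \<gamma> ?S x \<bullet> x"
      and "x \<in> ?P \<Longrightarrow> compressed_op \<gamma> ?S x \<bullet> x = 0 \<Longrightarrow> x \<in> ?M"
      using laplacian_form_nonneg[OF assms, of x] form[of x] by simp_all
    show "x \<in> ?M \<Longrightarrow> compressed_op \<gamma> ?S x \<bullet> x \<le> 0"
      and "x \<in> ?M \<Longrightarrow> compressed_op \<gamma> ?S x \<bullet> x = 0 \<Longrightarrow> x \<in> ?P"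
      using laplacian_form_nonpos[OF assms, of x] form[of x] by simp_all
  qed
qed

theorem compressed_laplacian_inertia:
  assumes "signed_graph \<gamma>"
  shows "n_zero (compressed_op \<gamma> (S_fixed \<gamma>)) (S_fixed \<gamma>) = num_components (all_edges \<gamma>)"
    and "n_neg (compressed_op \<gamma> (S_fixed \<gamma>)) (S_fixed \<gamma>)
           = num_components (neg_edges \<gamma>) - num_components (all_edges \<gamma>)"
    and "n_pos (compressed_op \<gamma> (S_fixed \<gamma>)) (S_fixed \<gamma>)
           = num_components (pos_edges \<gamma>) - num_components (all_edges \<gamma>)"
    and "dim (S_fixed \<gamma>) + num_components (all_edges \<gamma>)
           = num_components (pos_edges \<gamma>) + num_components (neg_edges \<gamma>)"
proof -
  interpret semidefinite_splitting "S_fixed \<gamma>" "compressed_op \<gamma> (S_fixed \<gamma>)"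
    "constant_on_edges (pos_edges \<gamma>)" "constant_on_edges (neg_edges \<gamma>)"
    by (rule semidefinite_splitting_compressed_laplacian[OF assms])
  note dims = dim_span_char_vec_components[unfolded span_char_vec_components]
    constant_on_pos_neg_edges
  show "n_zero (compressed_op \<gamma> (S_fixed \<gamma>)) (S_fixed \<gamma>) = num_components (all_edges \<gamma>)"
    using n_zero_eq by (simp add: dims)
  show "n_neg (compressed_op \<gamma> (S_fixed \<gamma>)) (S_fixed \<gamma>)
      = num_components (neg_edges \<gamma>) - num_components (all_edges \<gamma>)"
    using n_neg_eq by (simp add: dims)
  show "n_pos (compressed_op \<gamma> (S_fixed \<gamma>)) (S_fixed \<gamma>)
      = num_components (pos_edges \<gamma>) - num_components (all_edges \<gamma>)"
    using n_pos_eq by (simp add: dims)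
  show "dim (S_fixed \<gamma>) + num_components (all_edges \<gamma>)
      = num_components (pos_edges \<gamma>) + num_components (neg_edges \<gamma>)"
    using dim_add_dim_Int by (simp add: dims)
qed

lemma edges_eq_if_sgn_eq:
  assumes "\<forall>i j. sgn (\<gamma>' i j) = sgn (\<gamma> i j)"
  shows "pos_edges \<gamma>' = pos_edges \<gamma>" "neg_edges \<gamma>' = neg_edges \<gamma>" "all_edges \<gamma>' = all_edges \<gamma>"
proof -
  have "(0 < \<gamma>' i j \<longleftrightarrow> 0 < \<gamma> i j) \<and> (\<gamma>' i j < 0 \<longleftrightarrow> \<gamma> i j < 0)" for i j
    using assms[rule_format, of i j] sgn_1_pos[of "\<gamma>' i j"] sgn_1_pos[of "\<gamma> i j"]
      sgn_1_neg[of "\<gamma>' i j"] sgn_1_neg[of "\<gamma> i j"] by metis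
  then show pos: "pos_edges \<gamma>' = pos_edges \<gamma>" and neg: "neg_edges \<gamma>' = neg_edges \<gamma>"
    by (simp_all add: fun_eq_iff pos_edges_def neg_edges_def)
  have "all_edges \<delta> = (\<lambda>i j. pos_edges \<delta> i j \<or> neg_edges \<delta> i j)" for \<delta> :: "'a \<Rightarrow> 'a \<Rightarrow> real"
    by (auto simp: fun_eq_iff all_edges_def pos_edges_def neg_edges_def)
  then show "all_edges \<gamma>' = all_edges \<gamma>" using pos neg by simp
qed

theorem fixed_index_S_fixed:
  assumes "signed_graph \<gamma>"
  shows "fixed_index \<gamma> (S_fixed \<gamma>)"
  unfolding fixed_index_def
proof (intro conjI allI impI)
  show "subspace (S_fixed \<gamma>)" by (simp add: S_fixed_def)
  fix \<gamma>' assume \<gamma>': "signed_graph \<gamma>' \<and> (\<forall>i j. sgn (\<gamma>' i j) = sgn (\<gamma> i j))"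
  then have edges:
    "pos_edges \<gamma>' = pos_edges \<gamma>" "neg_edges \<gamma>' = neg_edges \<gamma>" "all_edges \<gamma>' = all_edges \<gamma>"
    using edges_eq_if_sgn_eq by blast+
  have S: "S_fixed \<gamma>' = S_fixed \<gamma>" by (simp add: S_fixed_def edges)
  have "signed_graph \<gamma>'" using \<gamma>' by blast
  note inertia' = compressed_laplacian_inertia[OF this, unfolded S edges]
  let ?f = "compressed_op \<gamma> (S_fixed \<gamma>)" and ?f' = "compressed_op \<gamma>' (S_fixed \<gamma>)"
  show "n_neg ?f' (S_fixed \<gamma>) = n_neg ?f (S_fixed \<gamma>)"
    and "n_zero ?f' (S_fixed \<gamma>) = n_zero ?f (S_fixed \<gamma>)"
    and "n_pos ?f' (S_fixed \<gamma>) = n_pos ?f (S_fixed \<gamma>)"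
    by (simp_all only: compressed_laplacian_inertia[OF assms] inertia')
qed

theorem mainTheorem9:
  fixes \<gamma> :: "'n::finite \<Rightarrow> 'n \<Rightarrow> real"
  assumes "signed_graph \<gamma>"
    and "connected_graph (all_edges \<gamma>)"
  shows "n_neg (compressed_op \<gamma> (S_fixed \<gamma>)) (S_fixed \<gamma>) = num_components (neg_edges \<gamma>) - 1
    \<and> n_zero (compressed_op \<gamma> (S_fixed \<gamma>)) (S_fixed \<gamma>) = 1
    \<and> n_pos (compressed_op \<gamma> (S_fixed \<gamma>)) (S_fixed \<gamma>) = num_components (pos_edges \<gamma>) - 1
    \<and> fixed_index \<gamma> (S_fixed \<gamma>)
    \<and> dim (S_fixed \<gamma>) = num_components (pos_edges \<gamma>) + num_components (neg_edges \<gamma>) - 1"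
  using compressed_laplacian_inertia[OF assms(1)] fixed_index_S_fixed[OF assms(1)]
    num_components_connected[OF assms(2)]
  by simp

end
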